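(* Let $d\ge2$, let $\{\mathbb{P}^u\}$ satisfy (P1), (P2), (D), (S1), (S2) (see context), fix $u\in(a,b)$, $\eta=\eta(u)$, $\Delta_S=\Delta_S(u)$. For $\alpha\in(0,1)$ and $\omega\in\Omega$ define $$R_{\mathrm{den}}(\omega,\alpha)=\inf\Big\{R_0\ge1:\ \text{for all }R\ge R_0\text{ and }x\in\mathcal S_\infty\cap B(0,r_{\alpha,R}),\ (1-\alpha)\eta\le\tfrac{|\mathcal S_\infty\cap B(x,R)|}{|B(x,R)|}\le(1+\alpha)\eta\Big\}$$ ($\inf\emptyset=\infty$). Then for every $n\in\mathbb{Z}_+$, $\mathbb{P}^u[R_{\mathrm{den}}(\cdot,\alpha)\ge n]\le C(\alpha)e^{-c(\alpha)(\log n)^{1+\Delta_S}}$ for constants $C(\alpha),c(\alpha)>0$. In particular $R_{\mathrm{den}}(\cdot,\alpha)$ is $\mathbb{P}^u$-a.s. finite and for all $R\ge R_{\mathrm{den}}(\omega,\alpha)$ and all $x\in\mathcal S_\infty\cap B(0,r_{\alpha,R})$, $(1-\alpha)\eta\le|\mathcal S_\infty\cap B(x,R)|/|B(x,R)|\le(1+\alpha)\eta$.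
   Context: Setting: $\Omega=\{0,1\}^{\mathbb{Z}^d}$ with product $\sigma$-algebra $\mathcal F$, shifts $(\Psi_x\omega)(y)=\omega(y+x)$; $\mathcal S=\{x:\omega(x)=1\}$ as a nearest-neighbour subgraph of $\mathbb{Z}^d$; $\mathcal S_r$ = vertices of $\mathcal S$ in components of $\ell^1$-diameter $\ge r$; $\mathcal S_\infty$ = vertices in infinite components; $B(x,r)$ closed $\ell^\infty$-ball in $\mathbb{Z}^d$. Increasing/decreasing events w.r.t. coordinatewise order. Probability measures $\mathbb{P}^u$, $u\in(a,b)$, $0<a<b<\infty$, satisfy: (P1) shifts are measure-preserving and ergodic; (P2) $\mathbb{P}^u[G]\le\mathbb{P}^{u'}[G]$ for increasing $G$, $u<u'$; (D) there are $\beta,\gamma,\zeta,C,c>0$ such that for $L,s\in\mathbb{Z}_+$, $|x_1-x_2|_\infty=sL$, $a<u<u'<b$, and events $A_i$ (increasing) resp. $B_i$ (decreasing) depending only on $\{\omega(y):y\in B(x_i,L)\}$: $\mathbb{P}^u[A_1\cap A_2]\le\mathbb{P}^{u'}[A_1]\mathbb{P}^{u'}[A_2]+\varepsilon$, $\mathbb{P}^{u'}[B_1\cap B_2]\le\mathbb{P}^{u}[B_1]\mathbb{P}^{u}[B_2]+\varepsilon$ with $\varepsilon=C\exp(-c\min\{(u'-u)^\beta s^\gamma,e^{(\log L)^\zeta}\})$; (S1) there is $f_S$ such that for each $u$ there are $\Delta_S(u)>0,R_S(u)$ with $f_S(u,R)\ge(\log R)^{1+\Delta_S}$ for $R\ge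 R_S$, and for all $R\ge1$, $\mathbb{P}^u[\mathcal S_R\cap B(0,R)\ne\emptyset]\ge1-e^{-f_S(u,R)}$ and $\mathbb{P}^u[\text{all }x,y\in\mathcal S_{R/10}\cap B(0,R)\text{ connected in }\mathcal S\cap B(0,2R)]\ge1-e^{-f_S(u,R)}$; (S2) $\eta(u)=\mathbb{P}^u[0\in\mathcal S_\infty]$ is positive and continuous. Heat kernel facts (known): for $\omega$ with $\mathcal S_\infty$ nonempty and connected, $P^\omega_x$ is the law of the continuous-time constant-speed simple random walk $(X_t)$ on $\mathcal S_\infty$ (unit-rate exponential holding times, jumps to a uniformly chosen neighbour in $\mathcal S_\infty$), $\mu_y$ the degree of $y$ in $\mathcal S_\infty$, $q^\omega_t(x,y)=P^\omega_x[X_t=y]/\mu_y$. There are constants $c_{hk1},\dots,c_{hk6}>0$ and random variables $\mathcal T(x,\omega)$ such that for $\mathbb{P}^u$-a.e. $\omega$ and $x\in\mathcal S_\infty$, $\mathcal T(x,\omega)<\infty$ and $c_{hk1}t^{-d/2}e^{-c_{hk2}|x-y|_1^2/t}\le q^\omega_t(x,y)\le c_{hk3}t^{-d/2}e^{-c_{hk4}|x-y|_1^2/t}$ for $y\in\mathcal S_\infty$, $t\ge\mathcal T(x,\omega)\vee|x-y|_1^{3/2}$, and $\mathbb{P}^u[\mathcal T(z,\cdot)\ge r]\le c_{hk5}e^{-c_{hk6}(\log r)^{1+\Delta_S}}$ for all $z$, $r\ge1$. Scale: let $\kappa_{d2}(\alpha)>0$ be increasing in $\alpha\in(0,1)$ such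 that for some $\kappa_{d1}(\alpha)$, $\mathbb{P}^u[|\mathcal S_\infty\cap B(0,R)|/|B(0,R)|\notin[(1-\alpha)\eta,(1+\alpha)\eta]\mid0\in\mathcal S_\infty]\le\kappa_{d1}(\alpha)e^{-\kappa_{d2}(\alpha)(\log R)^{1+\Delta_S}}$ for all $R\ge1$. Define $\kappa_{\mathrm{reg}}(\alpha)=\frac{1}{2d}(\kappa_{d2}(\alpha)\wedge c_{hk6})$ and $r_{\alpha,R}=\exp(\kappa_{\mathrm{reg}}(\alpha)(\log R)^{1+\Delta_S})$. *)

theory Defs
  imports "HOL-Probability.Probability"
begin

text \<open>Points of the lattice Z^d are functions from a finite index type 'd to int;
  configurations (elements of Omega = {0,1}^(Z^d)) are predicates on points.\<close>

type_synonym 'd pt = "'d \<Rightarrow> int"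
type_synonym 'd config = "'d pt \<Rightarrow> bool"

definition ptadd :: "'d pt \<Rightarrow> 'd pt \<Rightarrow> 'd pt" where
  "ptadd x y = (\<lambda>i. x i + y i)"

definition origin :: "'d pt" where "origin = (\<lambda>i. 0)"

definition l1dist :: "'d::finite pt \<Rightarrow> 'd pt \<Rightarrow> int" where
  "l1dist x y = (\<Sum>i\<in>UNIV. \<bar>x i - y i\<bar>)"

definition linfdist :: "'d::finite pt \<Rightarrow> 'd pt \<Rightarrow> int" where
  "linfdist x y = Max (range (\<lambda>i. \<bar>x i - y i\<bar>))"

definition lball :: "'d pt \<Rightarrow> real \<Rightarrow> 'd pt set" where
  "lball x R = {y. \<forall>i. real_of_int \<bar>y i - x i\<bar> \<le> R}"

definition shift :: "'d pt \<Rightarrow> 'd config \<Rightarrow> 'd config" where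
  "shift x \<omega> = (\<lambda>y. \<omega> (ptadd y x))"

definition Omega_measure :: "'d config measure" where
  "Omega_measure = PiM UNIV (\<lambda>_. count_space UNIV)"

definition adj :: "'d::finite pt \<Rightarrow> 'd pt \<Rightarrow> bool" where
  "adj x y \<longleftrightarrow> l1dist x y = 1"

inductive conn_in :: "'d::finite pt set \<Rightarrow> 'd pt \<Rightarrow> 'd pt \<Rightarrow> bool" for A where
  refl: "x \<in> A \<Longrightarrow> conn_in A x x"
| step: "conn_in A x y \<Longrightarrow> adj y z \<Longrightarrow> z \<in> A \<Longrightarrow> conn_in A x z"

definition Sset :: "'d config \<Rightarrow> 'd pt set" where
  "Sset \<omega> = {x. \<omega> x}"

definition comp :: "'d::finite config \<Rightarrow> 'd pt \<Rightarrow> 'd pt set" where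
  "comp \<omega> x = {y. conn_in (Sset \<omega>) x y}"

definition diam1 :: "'d::finite pt set \<Rightarrow> ereal" where
  "diam1 C = Sup {ereal (real_of_int (l1dist x y)) | x y. x \<in> C \<and> y \<in> C}"

definition Sr :: "'d::finite config \<Rightarrow> real \<Rightarrow> 'd pt set" where
  "Sr \<omega> r = {x \<in> Sset \<omega>. diam1 (comp \<omega> x) \<ge> ereal r}"

definition Sinf :: "'d::finite config \<Rightarrow> 'd pt set" where
  "Sinf \<omega> = {x \<in> Sset \<omega>. infinite (comp \<omega> x)}"

definition increasing_event :: "'d config set \<Rightarrow> bool" where
  "increasing_event G \<longleftrightarrow> (\<forall>\<omega>\<in>G. \<forall>\<omega>'. (\<forall>x. \<omega> x \<longrightarrow> \<omega>' x) \<longrightarrow> \<omega>' \<in> G)"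

definition decreasing_event :: "'d config set \<Rightarrow> bool" where
  "decreasing_event G \<longleftrightarrow> (\<forall>\<omega>\<in>G. \<forall>\<omega>'. (\<forall>x. \<omega>' x \<longrightarrow> \<omega> x) \<longrightarrow> \<omega>' \<in> G)"

definition depends_only_on :: "'d config set \<Rightarrow> 'd pt set \<Rightarrow> bool" where
  "depends_only_on G K \<longleftrightarrow>
     (\<forall>\<omega> \<omega>'. (\<forall>y\<in>K. \<omega> y = \<omega>' y) \<longrightarrow> (\<omega> \<in> G \<longleftrightarrow> \<omega>' \<in> G))"

definition shift_invariant_ergodic :: "'d config measure \<Rightarrow> bool" where
  "shift_invariant_ergodic M \<longleftrightarrow>
     (\<forall>x. shift x \<in> measurable M M \<and> distr M M (shift x) = M) \<and>
     (\<forall>A\<in>sets M. (\<forall>x. shift x -` A \<inter> space M = A) \<longrightarrow>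
        measure M A = 0 \<or> measure M A = 1)"

definition cond_P2 :: "real \<Rightarrow> real \<Rightarrow> (real \<Rightarrow> 'd config measure) \<Rightarrow> bool" where
  "cond_P2 a b P \<longleftrightarrow>
     (\<forall>u u' G. a < u \<and> u < u' \<and> u' < b \<and> G \<in> sets Omega_measure \<and> increasing_event G
        \<longrightarrow> measure (P u) G \<le> measure (P u') G)"

definition cond_D :: "real \<Rightarrow> real \<Rightarrow> (real \<Rightarrow> ('d::finite) config measure) \<Rightarrow> bool" where
  "cond_D a b P \<longleftrightarrow>
     (\<exists>\<beta> \<gamma> \<zeta> C c. \<beta> > 0 \<and> \<gamma> > 0 \<and> \<zeta> > 0 \<and> C > 0 \<and> c > 0 \<and>
       (\<forall>(L::nat) (s::nat) (x1::'d pt) x2 u u'.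
          L \<ge> 1 \<and> linfdist x1 x2 = int (s * L) \<and> a < u \<and> u < u' \<and> u' < b \<longrightarrow>
          (let \<epsilon> = C * exp (- c * min ((u' - u) powr \<beta> * real s powr \<gamma>)
                                       (exp (ln (real L) powr \<zeta>)))
           in (\<forall>A1 A2. A1 \<in> sets Omega_measure \<and> A2 \<in> sets Omega_measure \<and>
                  increasing_event A1 \<and> increasing_event A2 \<and>
                  depends_only_on A1 (lball x1 (real L)) \<and> depends_only_on A2 (lball x2 (real L))
                  \<longrightarrow> measure (P u) (A1 \<inter> A2) \<le> measure (P u') A1 * measure (P u') A2 + \<epsilon>) \<and>
              (\<forall>B1 B2. B1 \<in> sets Omega_measure \<and> B2 \<in> sets Omega_measure \<and>
                  decreasing_event B1 \<and> decreasing_event B2 \<and>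
                  depends_only_on B1 (lball x1 (real L)) \<and> depends_only_on B2 (lball x2 (real L))
                  \<longrightarrow> measure (P u') (B1 \<inter> B2) \<le> measure (P u) B1 * measure (P u) B2 + \<epsilon>))))"

definition cond_S1 :: "real \<Rightarrow> real \<Rightarrow> (real \<Rightarrow> ('d::finite) config measure)
     \<Rightarrow> (real \<Rightarrow> real \<Rightarrow> real) \<Rightarrow> (real \<Rightarrow> real) \<Rightarrow> (real \<Rightarrow> real) \<Rightarrow> bool" where
  "cond_S1 a b P fS DeltaS RS \<longleftrightarrow>
     (\<forall>u. a < u \<and> u < b \<longrightarrow>
        DeltaS u > 0 \<and>
        (\<forall>R. R \<ge> RS u \<longrightarrow> fS u R \<ge> ln R powr (1 + DeltaS u)) \<and>
        (\<forall>R\<ge>1.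
           measure (P u) {\<omega> \<in> space (P u). Sr \<omega> R \<inter> lball origin R \<noteq> {}}
              \<ge> 1 - exp (- fS u R) \<and>
           measure (P u) {\<omega> \<in> space (P u). \<forall>x\<in>Sr \<omega> (R/10) \<inter> lball origin R.
                \<forall>y\<in>Sr \<omega> (R/10) \<inter> lball origin R. conn_in (Sset \<omega> \<inter> lball origin (2*R)) x y}
              \<ge> 1 - exp (- fS u R)))"

definition eta :: "(real \<Rightarrow> ('d::finite) config measure) \<Rightarrow> real \<Rightarrow> real" where
  "eta P u = measure (P u) {\<omega> \<in> space (P u). origin \<in> Sinf \<omega>}"

definition dens :: "('d::finite) config \<Rightarrow> 'd pt \<Rightarrow> real \<Rightarrow> real" where
  "dens \<omega> x R = real (card (Sinf \<omega> \<inter> lball x R)) / real (card (lball x R))"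

definition kappa_reg :: "(real \<Rightarrow> real) \<Rightarrow> real \<Rightarrow> nat \<Rightarrow> real \<Rightarrow> real" where
  "kappa_reg kd2 chk6 d \<alpha> = (1 / (2 * real d)) * min (kd2 \<alpha>) chk6"

definition r_scale :: "(real \<Rightarrow> real) \<Rightarrow> real \<Rightarrow> nat \<Rightarrow> real \<Rightarrow> real \<Rightarrow> real \<Rightarrow> real" where
  "r_scale kd2 chk6 d DS \<alpha> R = exp (kappa_reg kd2 chk6 d \<alpha> * ln R powr (1 + DS))"

text \<open>The good-density property for a threshold R0, and R_den as an infimum in ereal
  (Inf of the empty set is infinity).\<close>
definition dens_good :: "(real \<Rightarrow> real) \<Rightarrow> real \<Rightarrow> real \<Rightarrow> real \<Rightarrow> ('d::finite) config
     \<Rightarrow> real \<Rightarrow> real \<Rightarrow> bool" where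
  "dens_good kd2 chk6 DS et \<omega> \<alpha> R \<longleftrightarrow>
     (\<forall>x \<in> Sinf \<omega> \<inter> lball origin (r_scale kd2 chk6 CARD('d) DS \<alpha> R).
        (1 - \<alpha>) * et \<le> dens \<omega> x R \<and> dens \<omega> x R \<le> (1 + \<alpha>) * et)"

definition R_den :: "(real \<Rightarrow> real) \<Rightarrow> real \<Rightarrow> real \<Rightarrow> real \<Rightarrow> ('d::finite) config
     \<Rightarrow> real \<Rightarrow> ereal" where
  "R_den kd2 chk6 DS et \<omega> \<alpha> =
     Inf (ereal ` {R0. R0 \<ge> 1 \<and> (\<forall>R\<ge>R0. dens_good kd2 chk6 DS et \<omega> \<alpha> R)})"

end

theory Submission
  imports Defs "HOL-Real_Asymp.Real_Asymp"
begin

text \<open>If R_den \<ge> n, then at some scale R \<ge> n - 1 the density of S_\<infinity> is off in a ball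
  B(x, R) with x \<in> S_\<infinity> \<inter> B(0, r_{\<alpha>,R}). The density only depends on k = \<lfloor>R\<rfloor>, so this is one
  of countably many events "x \<in> S_\<infinity> and the density around x at scale k is bad", with
  k \<ge> n - 1 and x \<in> B(0, r_{\<alpha>,k+1}). By shift invariance each of them has the probability of
  the same event at the origin, at most \<eta> \<kappa>_{d1} exp(-\<kappa>_{d2} (log k)^{1+\<Delta>}). The number of
  centres is at most (3 r_{\<alpha>,k+1})^d = 3^d exp(d \<kappa>_reg (log (k+1))^{1+\<Delta>}), and d \<kappa>_reg \<le> \<kappa>_{d2}/2,
  so the union bound still decays like exp(-c (log k)^{1+\<Delta>}); summing over k \<ge> n - 1 gives a
  bound of the same form in n, and letting n \<rightarrow> \<infinity> gives R_den < \<infinity> almost surely.\<close>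

section \<open>Lattice balls\<close>

lemma lball_floor: "lball x R = lball x (of_int \<lfloor>R\<rfloor>)"
  unfolding lball_def by (metis le_floor_iff of_int_le_iff)

lemma lball_eq_PiE: "lball x R = PiE UNIV (\<lambda>i. {x i - \<lfloor>R\<rfloor> .. x i + \<lfloor>R\<rfloor>})"
proof -
  have "lball x (of_int \<lfloor>R\<rfloor>) = PiE UNIV (\<lambda>i. {x i - \<lfloor>R\<rfloor> .. x i + \<lfloor>R\<rfloor>})"
    unfolding lball_def PiE_UNIV_domain Pi_def of_int_le_iff
    by (auto simp: abs_le_iff; metis add.commute diff_le_eq)
  then show ?thesis by (simp only: lball_floor[symmetric])
qed

lemma finite_lball: "finite (lball (x::'d::finite pt) R)"
  unfolding lball_eq_PiE by (rule finite_PiE) auto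

lemma card_lball: "R \<ge> 0 \<Longrightarrow> card (lball (x::'d::finite pt) R) = (2 * nat \<lfloor>R\<rfloor> + 1) ^ CARD('d)"
  unfolding lball_eq_PiE by (simp add: card_PiE) (simp add: nat_add_distrib nat_mult_distrib)

lemma card_lball_le:
  assumes "R \<ge> 1"
  shows "real (card (lball (x::'d::finite pt) R)) \<le> (3 * R) ^ CARD('d)"
proof -
  have "real (2 * nat \<lfloor>R\<rfloor> + 1) \<le> 3 * R"
    using assms of_int_floor_le[of R] by simp linarith
  then have "real (2 * nat \<lfloor>R\<rfloor> + 1) ^ CARD('d) \<le> (3 * R) ^ CARD('d)"
    by (rule power_mono) simp
  then show ?thesis
    using assms by (simp add: card_lball del: of_nat_Suc)
qed

lemma lball_mono: "r \<le> r' \<Longrightarrow> lball x r \<subseteq> lball x r'"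
  unfolding lball_def by (auto intro: order_trans)

lemma infinite_iff_not_subset_lball:
  "infinite C \<longleftrightarrow> (\<forall>N::nat. \<not> C \<subseteq> lball (x::'d::finite pt) (real N))"
proof
  show "infinite C \<Longrightarrow> \<forall>N::nat. \<not> C \<subseteq> lball x (real N)"
    using finite_subset finite_lball by blast
next
  assume unbounded: "\<forall>N::nat. \<not> C \<subseteq> lball x (real N)"
  show "infinite C"
  proof
    assume "finite C"
    then have "finite ((\<lambda>(y, i). nat \<bar>y i - x i\<bar>) ` (C \<times> UNIV))" by simp
    then obtain N where N: "\<forall>n \<in> (\<lambda>(y, i). nat \<bar>y i - x i\<bar>) ` (C \<times> UNIV). n \<le> N"
      unfolding finite_nat_set_iff_bounded_le by blast
    have "real_of_int \<bar>y i - x i\<bar> \<le> real N" if "y \<in> C" for y i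
    proof -
      have "nat \<bar>y i - x i\<bar> \<le> N" using N that by auto
      then have "\<bar>y i - x i\<bar> \<le> int N" by (simp add: nat_le_iff)
      then show ?thesis by (metis of_int_le_iff of_int_of_nat_eq)
    qed
    then have "C \<subseteq> lball x (real N)"
      unfolding lball_def by blast
    with unbounded show False by blast
  qed
qed

section \<open>Translation invariance\<close>

definition ptneg :: "'d pt \<Rightarrow> 'd pt" where "ptneg x = (\<lambda>i. - x i)"

lemma ptadd_origin [simp]: "ptadd origin x = x"
  by (auto simp: ptadd_def origin_def)

lemma ptadd_ptneg_cancel [simp]: "ptadd (ptadd v x) (ptneg x) = v" "ptadd (ptadd v (ptneg x)) x = v"
  by (auto simp: ptadd_def ptneg_def)

lemma inj_ptadd_right: "inj (\<lambda>v. ptadd v x)"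
  by (rule inj_on_inverseI[where g="\<lambda>v. ptadd v (ptneg x)"]) simp

lemma adj_ptadd_cancel [simp]: "adj (ptadd y x) (ptadd z x) = adj (y::'d::finite pt) z"
  by (simp add: adj_def l1dist_def ptadd_def)

lemma conn_in_ptadd:
  assumes "conn_in A y z" "\<And>v. v \<in> A \<Longrightarrow> ptadd v x \<in> B"
  shows "conn_in B (ptadd y x) (ptadd z x)"
  using assms(1)
proof induction
  case (refl y)
  then show ?case using assms(2) by (intro conn_in.refl)
next
  case (step y z w)
  then show ?case using assms(2) by (metis adj_ptadd_cancel conn_in.step)
qed

lemma Sset_shift_iff: "v \<in> Sset (shift x \<omega>) \<longleftrightarrow> ptadd v x \<in> Sset \<omega>"
  by (simp add: Sset_def shift_def)

lemma conn_in_Sset_shift_iff: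
  "conn_in (Sset (shift x \<omega>)) y z \<longleftrightarrow> conn_in (Sset \<omega>) (ptadd y x) (ptadd z x)"
proof
  assume "conn_in (Sset (shift x \<omega>)) y z"
  then show "conn_in (Sset \<omega>) (ptadd y x) (ptadd z x)"
    by (rule conn_in_ptadd) (simp add: Sset_shift_iff)
next
  assume "conn_in (Sset \<omega>) (ptadd y x) (ptadd z x)"
  from conn_in_ptadd[OF this, of "ptneg x" "Sset (shift x \<omega>)"]
  show "conn_in (Sset (shift x \<omega>)) y z" by (simp add: Sset_shift_iff)
qed

lemma comp_ptadd: "comp \<omega> (ptadd y x) = (\<lambda>v. ptadd v x) ` comp (shift x \<omega>) y"
proof safe
  fix w assume "w \<in> comp \<omega> (ptadd y x)"
  then have "ptadd w (ptneg x) \<in> comp (shift x \<omega>) y"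
    unfolding comp_def by (simp add: conn_in_Sset_shift_iff)
  then show "w \<in> (\<lambda>v. ptadd v x) ` comp (shift x \<omega>) y"
    by (rule rev_image_eqI) simp
qed (simp add: comp_def conn_in_Sset_shift_iff)

lemma Sinf_shift_iff: "y \<in> Sinf (shift x \<omega>) \<longleftrightarrow> ptadd y x \<in> Sinf \<omega>"
proof -
  have "finite (comp \<omega> (ptadd y x)) \<longleftrightarrow> finite (comp (shift x \<omega>) y)"
    unfolding comp_ptadd by (rule finite_image_iff[OF inj_on_subset[OF inj_ptadd_right subset_UNIV]])
  then show ?thesis unfolding Sinf_def by (simp add: Sset_shift_iff)
qed

lemma lball_ptadd: "lball (ptadd y x) R = (\<lambda>v. ptadd v x) ` lball y R"
proof safe
  fix w assume "w \<in> lball (ptadd y x) R"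
  then have "ptadd w (ptneg x) \<in> lball y R"
    by (simp add: lball_def ptadd_def ptneg_def algebra_simps)
  then show "w \<in> (\<lambda>v. ptadd v x) ` lball y R" by (rule rev_image_eqI) simp
qed (simp add: lball_def ptadd_def)

lemma dens_shift: "dens (shift x \<omega>) y R = dens \<omega> (ptadd y x) R"
proof -
  have inj: "inj_on (\<lambda>v. ptadd v x) S" for S by (rule inj_on_subset[OF inj_ptadd_right]) simp
  have "Sinf \<omega> \<inter> lball (ptadd y x) R = (\<lambda>v. ptadd v x) ` (Sinf (shift x \<omega>) \<inter> lball y R)"
    unfolding lball_ptadd by (auto simp: Sinf_shift_iff)
  then show ?thesis unfolding dens_def lball_ptadd
    by (simp add: card_image[OF inj])
qed

section \<open>Measurability\<close>

lemma conn_in_mono: "conn_in A x y \<Longrightarrow> A \<subseteq> B \<Longrightarrow> conn_in B x y"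
proof (induction rule: conn_in.induct)
  case (refl x)
  then show ?case by (blast intro: conn_in.refl)
next
  case (step x y z)
  then show ?case by (blast intro: conn_in.step)
qed

lemma conn_in_finite_subset:
  "conn_in A x y \<Longrightarrow> \<exists>F. finite F \<and> F \<subseteq> A \<and> conn_in F x y"
proof (induction rule: conn_in.induct)
  case (refl x)
  have "conn_in {x} x x" by (rule conn_in.refl) simp
  then show ?case using refl by blast
next
  case (step x y z)
  then obtain F where F: "finite F" "F \<subseteq> A" "conn_in F x y" by blast
  have "conn_in (insert z F) x y" using F(3) by (rule conn_in_mono) blast
  then have "conn_in (insert z F) x z" using step(2) by (rule conn_in.step) simp
  then show ?case using F step(3) by blast
qed

lemma conn_in_iff_list:
  "conn_in A x y \<longleftrightarrow> (\<exists>ps. conn_in (set ps) x y \<and> (\<forall>t\<in>set ps. t \<in> A))"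
proof
  assume "conn_in A x y"
  from conn_in_finite_subset[OF this] obtain F where "finite F" "F \<subseteq> A" "conn_in F x y"
    by blast
  moreover obtain ps where "set ps = F" using finite_list[OF \<open>finite F\<close>] by blast
  ultimately show "\<exists>ps. conn_in (set ps) x y \<and> (\<forall>t\<in>set ps. t \<in> A)" by blast
next
  assume "\<exists>ps. conn_in (set ps) x y \<and> (\<forall>t\<in>set ps. t \<in> A)"
  then obtain ps where "conn_in (set ps) x y" "set ps \<subseteq> A" by blast
  then show "conn_in A x y" by (rule conn_in_mono)
qed

lemma space_Omega_measure: "space Omega_measure = UNIV"
  by (simp add: Omega_measure_def space_PiM PiE_UNIV_domain)

lemma pred_coord [measurable]: "Measurable.pred Omega_measure (\<lambda>\<omega>. \<omega> (y::'d::finite pt))"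
proof -
  have "(\<lambda>\<omega>. \<omega> y) \<in> measurable Omega_measure (count_space UNIV)"
    unfolding Omega_measure_def by (rule measurable_component_singleton) simp
  from pred_sets2[OF _ this, of "{True}"] show ?thesis by simp
qed

lemma pred_conn_in_Sset [measurable]:
  "Measurable.pred Omega_measure (\<lambda>\<omega>. conn_in (Sset \<omega>) x (y::'d::finite pt))"
  by (subst conn_in_iff_list, unfold Sset_def mem_Collect_eq)
    (intro pred_intros_countable(2) pred_intros_conj1' pred_intros_finite(3) pred_coord; simp)

lemma pred_Sinf [measurable]: "Measurable.pred Omega_measure (\<lambda>\<omega>. (x::'d::finite pt) \<in> Sinf \<omega>)"
proof -
  have "x \<in> Sinf \<omega> \<longleftrightarrow> \<omega> x \<and> (\<forall>N::nat. \<exists>y. y \<notin> lball x (real N) \<and> conn_in (Sset \<omega>) x y)"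
    for \<omega>
    unfolding Sinf_def infinite_iff_not_subset_lball[where x = x] comp_def Sset_def by auto
  then show ?thesis by simp
qed

lemma pred_trace_finite:
  assumes "finite B" "\<And>y. y \<in> B \<Longrightarrow> Measurable.pred M (\<lambda>\<omega>. y \<in> S \<omega>)"
  shows "Measurable.pred M (\<lambda>\<omega>. Q (S \<omega> \<inter> B))"
proof -
  have "Q (S \<omega> \<inter> B) \<longleftrightarrow> (\<exists>T\<in>Pow B. Q T \<and> (\<forall>y\<in>B. y \<in> S \<omega> \<longleftrightarrow> y \<in> T))" for \<omega>
  proof
    assume "Q (S \<omega> \<inter> B)"
    then show "\<exists>T\<in>Pow B. Q T \<and> (\<forall>y\<in>B. y \<in> S \<omega> \<longleftrightarrow> y \<in> T)"
      by (intro bexI[of _ "S \<omega> \<inter> B"]) auto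
  next
    assume "\<exists>T\<in>Pow B. Q T \<and> (\<forall>y\<in>B. y \<in> S \<omega> \<longleftrightarrow> y \<in> T)"
    then obtain T where "T \<subseteq> B" "Q T" "\<forall>y\<in>B. y \<in> S \<omega> \<longleftrightarrow> y \<in> T" by auto
    moreover from this have "S \<omega> \<inter> B = T" by auto
    ultimately show "Q (S \<omega> \<inter> B)" by simp
  qed
  then show ?thesis
    using assms by simp
qed

lemma pred_dens [measurable]:
  "Measurable.pred Omega_measure (\<lambda>\<omega>. Q (dens \<omega> (x::'d::finite pt) R))"
  unfolding dens_def by (rule pred_trace_finite[OF finite_lball pred_Sinf])

section \<open>The density threshold R_den\<close>

lemma dens_floor: "dens \<omega> x R = dens \<omega> x (of_int \<lfloor>R\<rfloor>)"
  unfolding dens_def by (metis lball_floor)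

lemma r_scale_mono:
  assumes "kappa_reg kd2 chk6 d \<alpha> \<ge> 0" "1 + DS \<ge> 0" "1 \<le> R" "R \<le> R'"
  shows "r_scale kd2 chk6 d DS \<alpha> R \<le> r_scale kd2 chk6 d DS \<alpha> R'"
proof -
  have "ln R powr (1 + DS) \<le> ln R' powr (1 + DS)"
    using assms by (intro powr_mono2) auto
  then show ?thesis unfolding r_scale_def using assms(1) by (simp add: mult_left_mono)
qed

definition dens_good_from :: "(real \<Rightarrow> real) \<Rightarrow> real \<Rightarrow> real \<Rightarrow> real \<Rightarrow> ('d::finite) config
     \<Rightarrow> real \<Rightarrow> real \<Rightarrow> bool" where
  "dens_good_from kd2 chk6 DS et \<omega> \<alpha> R0 \<longleftrightarrow> (\<forall>R\<ge>R0. dens_good kd2 chk6 DS et \<omega> \<alpha> R)"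

lemma Rden_ge_iff:
  "ereal t \<le> R_den kd2 chk6 DS et \<omega> \<alpha> \<longleftrightarrow>
   (\<forall>R0\<ge>1. dens_good_from kd2 chk6 DS et \<omega> \<alpha> R0 \<longrightarrow> t \<le> R0)"
  unfolding R_den_def le_Inf_iff dens_good_from_def by auto

lemma one_le_Rden: "1 \<le> R_den kd2 chk6 DS et \<omega> \<alpha>"
  using Rden_ge_iff[of 1] by (simp add: one_ereal_def)

lemma dens_good_floor_mono:
  assumes "kappa_reg kd2 chk6 CARD('d) \<alpha> \<ge> 0" "1 + DS \<ge> 0" "1 \<le> R" "R \<le> R'" "\<lfloor>R'\<rfloor> = \<lfloor>R\<rfloor>"
    and "dens_good kd2 chk6 DS et (\<omega>::'d::finite config) \<alpha> R'"
  shows "dens_good kd2 chk6 DS et \<omega> \<alpha> R"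
proof -
  have "lball origin (r_scale kd2 chk6 CARD('d) DS \<alpha> R) \<subseteq> lball origin (r_scale kd2 chk6 CARD('d) DS \<alpha> R')"
    using assms(1-4) by (intro lball_mono r_scale_mono)
  moreover have "dens \<omega> x R = dens \<omega> x R'" for x
    using assms(5) by (metis dens_floor)
  ultimately show ?thesis
    using assms(6) unfolding dens_good_def by auto
qed

text \<open>The infimum defining R_den need not be attained; but some admissible threshold lies
  below a scale R' > R with \<lfloor>R'\<rfloor> = \<lfloor>R\<rfloor>, and dens_good passes from R' down to R.\<close>
lemma dens_good_of_Rden_le:
  assumes "kappa_reg kd2 chk6 CARD('d) \<alpha> \<ge> 0" "1 + DS \<ge> 0"
    and "R_den kd2 chk6 DS et (\<omega>::'d::finite config) \<alpha> \<le> ereal R"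
  shows "dens_good kd2 chk6 DS et \<omega> \<alpha> R"
proof -
  define R' where "R' = (R + of_int \<lfloor>R\<rfloor> + 1) / 2"
  have R': "R < R'" "\<lfloor>R'\<rfloor> = \<lfloor>R\<rfloor>"
    unfolding R'_def using of_int_floor_le[of R] real_of_int_floor_add_one_gt[of R]
    by (simp_all add: floor_eq_iff) linarith+
  have "R_den kd2 chk6 DS et \<omega> \<alpha> < ereal R'" using assms(3) R' by (simp add: le_less_trans)
  then obtain R0 where "R0 \<ge> 1" "dens_good_from kd2 chk6 DS et \<omega> \<alpha> R0" "R0 < R'"
    unfolding R_den_def Inf_less_iff dens_good_from_def by auto
  then have good: "dens_good kd2 chk6 DS et \<omega> \<alpha> R'" unfolding dens_good_from_def by simp
  have "1 \<le> R" using one_le_Rden assms(3) by (metis ereal_less_eq(3) one_ereal_def order_trans)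
  from dens_good_floor_mono[OF assms(1,2) this less_imp_le[OF R'(1)] R'(2) good] show ?thesis .
qed

lemma Rden_ge_iff_seq:
  "ereal t \<le> R_den kd2 chk6 DS et \<omega> \<alpha> \<longleftrightarrow>
   (\<forall>m::nat. 1 \<le> t - 1 / (real m + 1) \<longrightarrow> \<not> dens_good_from kd2 chk6 DS et \<omega> \<alpha> (t - 1 / (real m + 1)))"
  unfolding Rden_ge_iff
proof (intro iffI allI impI)
  fix m :: nat
  assume "\<forall>R0\<ge>1. dens_good_from kd2 chk6 DS et \<omega> \<alpha> R0 \<longrightarrow> t \<le> R0"
    and "1 \<le> t - 1 / (real m + 1)"
  moreover have "\<not> t \<le> t - 1 / (real m + 1)" by (simp add: add_pos_nonneg)
  ultimately show "\<not> dens_good_from kd2 chk6 DS et \<omega> \<alpha> (t - 1 / (real m + 1))" by blast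
next
  fix R0 :: real
  assume H: "\<forall>m::nat. 1 \<le> t - 1 / (real m + 1) \<longrightarrow> \<not> dens_good_from kd2 chk6 DS et \<omega> \<alpha> (t - 1 / (real m + 1))"
    and R0: "1 \<le> R0" "dens_good_from kd2 chk6 DS et \<omega> \<alpha> R0"
  show "t \<le> R0"
  proof (rule ccontr)
    assume "\<not> t \<le> R0"
    then have "0 < t - R0" by simp
    then obtain m where "inverse (real (Suc m)) < t - R0" using reals_Archimedean by blast
    then have m: "R0 < t - 1 / (real m + 1)" by (simp add: inverse_eq_divide add.commute)
    then have "dens_good_from kd2 chk6 DS et \<omega> \<alpha> (t - 1 / (real m + 1))"
      using R0(2) unfolding dens_good_from_def by simp
    moreover have "1 \<le> t - 1 / (real m + 1)" using m R0(1) by simp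
    ultimately show False using H by blast
  qed
qed

lemma dens_good_from_iff_countable:
  "dens_good_from kd2 chk6 DS et (\<omega>::'d::finite config) \<alpha> R0 \<longleftrightarrow>
   (\<forall>x::'d pt. \<forall>k::int. (\<exists>R\<ge>R0. \<lfloor>R\<rfloor> = k \<and> x \<in> lball origin (r_scale kd2 chk6 CARD('d) DS \<alpha> R)) \<longrightarrow>
      x \<in> Sinf \<omega> \<longrightarrow> (1 - \<alpha>) * et \<le> dens \<omega> x (of_int k) \<and> dens \<omega> x (of_int k) \<le> (1 + \<alpha>) * et)"
  (is "?good \<longleftrightarrow> (\<forall>x k. ?reached x k \<longrightarrow> x \<in> Sinf \<omega> \<longrightarrow> ?ok (of_int k) x)")
proof (intro iffI allI impI)
  fix x k
  assume "?good" "?reached x k" "x \<in> Sinf \<omega>"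
  then obtain R where "R \<ge> R0" "\<lfloor>R\<rfloor> = k" "?ok R x"
    unfolding dens_good_from_def dens_good_def by blast
  then show "?ok (of_int k) x" by (metis dens_floor)
next
  assume H: "\<forall>x k. ?reached x k \<longrightarrow> x \<in> Sinf \<omega> \<longrightarrow> ?ok (of_int k) x"
  show ?good unfolding dens_good_from_def dens_good_def
  proof (intro allI impI ballI)
    fix R x
    assume "R0 \<le> R" "x \<in> Sinf \<omega> \<inter> lball origin (r_scale kd2 chk6 CARD('d) DS \<alpha> R)"
    then have "?ok (of_int \<lfloor>R\<rfloor>) x" using H by blast
    then show "?ok R x" by (metis dens_floor)
  qed
qed

lemma pred_Rden_ge [measurable]:
  "Measurable.pred Omega_measure (\<lambda>\<omega>::'d::finite config. ereal t \<le> R_den kd2 chk6 DS et \<omega> \<alpha>)"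
  unfolding Rden_ge_iff_seq dens_good_from_iff_countable
  by (intro pred_intros_countable(1) pred_intros_imp' pred_intros_logic(2,3,4) pred_Sinf pred_dens)

definition dens_bad :: "real \<Rightarrow> real \<Rightarrow> ('d::finite) pt \<Rightarrow> real \<Rightarrow> 'd config set" where
  "dens_bad et \<alpha> x R =
     {\<omega>. x \<in> Sinf \<omega> \<and> (dens \<omega> x R < (1 - \<alpha>) * et \<or> (1 + \<alpha>) * et < dens \<omega> x R)}"

lemma dens_bad_shift: "dens_bad et \<alpha> x R = shift x -` dens_bad et \<alpha> origin R"
  unfolding dens_bad_def by (simp add: Sinf_shift_iff dens_shift)

lemma sets_dens_bad [measurable]: "dens_bad et \<alpha> x R \<in> sets Omega_measure"
proof -
  have "Measurable.pred Omega_measure (\<lambda>\<omega>. \<omega> \<in> dens_bad et \<alpha> x R)"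
    unfolding dens_bad_def by simp
  from predE[OF this] show ?thesis by (simp add: space_Omega_measure)
qed

definition dens_bad_scale :: "(real \<Rightarrow> real) \<Rightarrow> real \<Rightarrow> real \<Rightarrow> real \<Rightarrow> real \<Rightarrow> nat
     \<Rightarrow> ('d::finite) config set" where
  "dens_bad_scale kd2 chk6 DS et \<alpha> k =
     (\<Union>x\<in>lball origin (r_scale kd2 chk6 CARD('d) DS \<alpha> (real k + 1)). dens_bad et \<alpha> x (real k))"

lemma sets_dens_bad_scale [measurable]:
  "(dens_bad_scale kd2 chk6 DS et \<alpha> k :: 'd::finite config set) \<in> sets Omega_measure"
  unfolding dens_bad_scale_def by (intro sets.finite_UN finite_lball sets_dens_bad)

lemma Rden_ge_imp_dens_bad_scale:
  assumes "kappa_reg kd2 chk6 CARD('d) \<alpha> \<ge> 0" "1 + DS \<ge> 0" "n \<ge> 2"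
    and "ereal (real n) \<le> R_den kd2 chk6 DS et (\<omega>::'d::finite config) \<alpha>"
  shows "\<exists>k\<ge>n - 1. \<omega> \<in> dens_bad_scale kd2 chk6 DS et \<alpha> k"
proof -
  have "\<not> dens_good_from kd2 chk6 DS et \<omega> \<alpha> (real n - 1)"
  proof
    assume "dens_good_from kd2 chk6 DS et \<omega> \<alpha> (real n - 1)"
    moreover have "1 \<le> real n - 1" using assms(3) by simp
    ultimately have "real n \<le> real n - 1" using assms(4) unfolding Rden_ge_iff by blast
    then show False by simp
  qed
  then obtain R where R: "R \<ge> real n - 1" "\<not> dens_good kd2 chk6 DS et \<omega> \<alpha> R"
    unfolding dens_good_from_def by auto
  then obtain x where x: "x \<in> Sinf \<omega>" "x \<in> lball origin (r_scale kd2 chk6 CARD('d) DS \<alpha> R)"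
    and bad: "\<not> ((1 - \<alpha>) * et \<le> dens \<omega> x R \<and> dens \<omega> x R \<le> (1 + \<alpha>) * et)"
    unfolding dens_good_def by auto
  define k where "k = nat \<lfloor>R\<rfloor>"
  have "R \<ge> 1" using R(1) assms(3) by linarith
  then have k: "real k = of_int \<lfloor>R\<rfloor>" "k \<ge> n - 1" "R \<le> real k + 1"
    unfolding k_def using R(1) assms(3) real_of_int_floor_add_one_gt[of R]
    by (simp_all add: le_nat_iff le_floor_iff)
  have "lball origin (r_scale kd2 chk6 CARD('d) DS \<alpha> R)
      \<subseteq> lball origin (r_scale kd2 chk6 CARD('d) DS \<alpha> (real k + 1))"
    using assms(1,2) \<open>R \<ge> 1\<close> k(3) by (intro lball_mono r_scale_mono)
  moreover have "dens \<omega> x R = dens \<omega> x (real k)" using dens_floor[of \<omega> x R] k(1) by simp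
  ultimately show ?thesis
    using x bad k(2) unfolding dens_bad_def dens_bad_scale_def by (intro exI[of _ k]) auto
qed

section \<open>Series of the form \<Sum> exp(-c (log n)^p)\<close>

lemma summable_exp_neg_ln_powr:
  assumes "p > 1" "c > 0"
  shows "summable (\<lambda>j::nat. exp (- c * ln (real j) powr p))"
proof (rule summable_comparison_test_ev)
  have "eventually (\<lambda>j::nat. exp (- c * ln (real j) powr p) \<le> inverse (real j ^ 2)) sequentially"
    using assms by real_asymp
  then show "eventually (\<lambda>j. norm (exp (- c * ln (real j) powr p)) \<le> inverse (real j ^ 2)) sequentially"
    by simp
qed (rule inverse_power_summable, simp)

lemma suminf_exp_neg_ln_powr_tail_le:
  assumes "p > 1" "c > 0"
  obtains C where "\<And>n. n \<ge> 1 \<Longrightarrow> summable (\<lambda>i. exp (- c * ln (real (n + i)) powr p)) \<and>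
    (\<Sum>i. exp (- c * ln (real (n + i)) powr p)) \<le> C * exp (- (c / 2) * ln (real n) powr p)"
proof
  let ?h = "\<lambda>j::nat. exp (- (c / 2) * ln (real j) powr p)"
  have h: "summable ?h" using assms by (intro summable_exp_neg_ln_powr) auto
  fix n :: nat assume "n \<ge> 1"
  have split: "exp (- c * ln (real (n + i)) powr p) \<le> exp (- (c / 2) * ln (real n) powr p) * ?h (n + i)" for i
  proof -
    have "ln (real n) powr p \<le> ln (real (n + i)) powr p"
      using \<open>n \<ge> 1\<close> assms(1) by (intro powr_mono2) auto
    then have "c * ln (real n) powr p \<le> c * ln (real (n + i)) powr p"
      using assms(2) by (intro mult_left_mono) auto
    then have "- c * ln (real (n + i)) powr p
        \<le> - (c / 2) * ln (real n) powr p + - (c / 2) * ln (real (n + i)) powr p"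
      by linarith
    then show ?thesis by (simp add: mult_exp_exp)
  qed
  have tail: "summable (\<lambda>i. ?h (n + i))" "(\<Sum>i. ?h (n + i)) \<le> suminf ?h"
    using summable_ignore_initial_segment[OF h, of n] suminf_split_initial_segment[OF h, of n]
    by (simp_all add: add.commute sum_nonneg)
  have summable: "summable (\<lambda>i. exp (- c * ln (real (n + i)) powr p))"
    using split by (intro summable_comparison_test'[OF summable_mult[OF tail(1)], of 0]) auto
  have "(\<Sum>i. exp (- c * ln (real (n + i)) powr p))
      \<le> (\<Sum>i. exp (- (c / 2) * ln (real n) powr p) * ?h (n + i))"
    using split summable summable_mult[OF tail(1)] by (intro suminf_le) auto
  also have "\<dots> \<le> exp (- (c / 2) * ln (real n) powr p) * suminf ?h"
    using tail by (simp add: suminf_mult)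
  finally show "summable (\<lambda>i. exp (- c * ln (real (n + i)) powr p)) \<and>
    (\<Sum>i. exp (- c * ln (real (n + i)) powr p)) \<le> suminf ?h * exp (- (c / 2) * ln (real n) powr p)"
    using summable by (simp add: mult.commute)
qed

lemma eventually_ln_powr_succ_le:
  assumes "p > 1" "a > 0" "0 \<le> e" "e \<le> a / 2"
  shows "eventually (\<lambda>k::nat. e * ln (real k + 1) powr p - a * ln (real k) powr p
            \<le> - (a / 6) * ln (real k + 1) powr p) sequentially"
proof -
  have "eventually (\<lambda>k::nat. a / 2 * ln (real k + 1) powr p - a * ln (real k) powr p
            \<le> - (a / 6) * ln (real k + 1) powr p) sequentially"
    using assms(1,2) by real_asymp
  moreover have "e * ln (real k + 1) powr p \<le> a / 2 * ln (real k + 1) powr p" for k :: nat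
    using assms(4) by (intro mult_right_mono) auto
  ultimately show ?thesis by (elim eventually_mono) (smt (verit))
qed

lemma eventually_le_imp_le_const_mult:
  fixes f g :: "nat \<Rightarrow> real"
  assumes "eventually (\<lambda>n. f n \<le> C * g n) sequentially" "\<And>n. f n \<le> 1" "\<And>n. g n > 0"
  obtains C' where "C' > 0" "\<And>n. f n \<le> C' * g n"
proof -
  obtain N where N: "\<And>n. n \<ge> N \<Longrightarrow> f n \<le> C * g n"
    using assms(1) unfolding eventually_sequentially by blast
  define C' where "C' = max C (Max (insert 1 ((\<lambda>n. 1 / g n) ` {..<N})))"
  have C': "C \<le> C'" "1 \<le> C'" "\<And>n. n < N \<Longrightarrow> 1 / g n \<le> C'"
    unfolding C'_def by (auto intro: le_max_iff_disj[THEN iffD2] Max_ge)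
  have "f n \<le> C' * g n" for n
  proof (cases "n < N")
    case True
    have "f n \<le> 1 / g n * g n" using assms(2,3)[of n] by simp
    also have "\<dots> \<le> C' * g n" using C'(3)[OF True] assms(3)[of n] by (intro mult_right_mono) auto
    finally show ?thesis .
  next
    case False
    then have "f n \<le> C * g n" using N by simp
    also have "\<dots> \<le> C' * g n" using C'(1) assms(3)[of n] by (intro mult_right_mono) auto
    finally show ?thesis .
  qed
  moreover have "C' > 0" using C'(2) by simp
  ultimately show thesis using that by blast
qed

lemma tendsto_exp_neg_ln_powr:
  assumes "p > 1" "c > 0"
  shows "(\<lambda>n::nat. C * exp (- c * ln (real n) powr p)) \<longlonglongrightarrow> 0"
  using assms by real_asymp

lemma (in finite_measure) AE_less_PInf_of_tail_bound:
  fixes X :: "'a \<Rightarrow> ereal" and h :: "nat \<Rightarrow> real"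
  assumes sets: "\<And>n. {\<omega> \<in> space M. ereal (real n) \<le> X \<omega>} \<in> sets M"
    and bound: "\<And>n. measure M {\<omega> \<in> space M. ereal (real n) \<le> X \<omega>} \<le> h n"
    and "h \<longlonglongrightarrow> 0"
  shows "AE \<omega> in M. X \<omega> < \<infinity>"
proof -
  define N where "N = (\<Inter>n. {\<omega> \<in> space M. ereal (real n) \<le> X \<omega>})"
  have N: "N \<in> sets M" unfolding N_def using sets by auto
  have "measure M N \<le> h n" for n
  proof -
    have "N \<subseteq> {\<omega> \<in> space M. ereal (real n) \<le> X \<omega>}" unfolding N_def by blast
    then have "measure M N \<le> measure M {\<omega> \<in> space M. ereal (real n) \<le> X \<omega>}"
      using sets by (rule finite_measure_mono)
    then show ?thesis using bound[of n] by linarith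
  qed
  then have "measure M N \<le> 0"
    using assms(3) by (intro LIMSEQ_le_const[of h 0]) auto
  then have "emeasure M N = 0" by (simp add: emeasure_eq_measure measure_le_0_iff)
  moreover have "{\<omega> \<in> space M. \<not> X \<omega> < \<infinity>} = N"
  proof (intro equalityI subsetI)
    fix \<omega> assume "\<omega> \<in> {\<omega> \<in> space M. \<not> X \<omega> < \<infinity>}"
    then show "\<omega> \<in> N" unfolding N_def by simp
  next
    fix \<omega> assume "\<omega> \<in> N"
    then have "\<omega> \<in> space M" "\<And>n. ereal (real n) \<le> X \<omega>" unfolding N_def by auto
    moreover have "\<not> X \<omega> < \<infinity>"
    proof
      assume "X \<omega> < \<infinity>"
      then obtain n :: nat where "X \<omega> < ereal (real n)" using less_PInf_Ex_of_nat by auto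
      with calculation(2)[of n] show False by simp
    qed
    ultimately show "\<omega> \<in> {\<omega> \<in> space M. \<not> X \<omega> < \<infinity>}" by simp
  qed
  ultimately show ?thesis by (simp add: AE_iff_measurable[OF N])
qed

section \<open>Shift-invariant measures on configurations\<close>

locale stationary_config_measure = prob_space M
  for M :: "('d::finite) config measure" +
  assumes sets_eq_Omega: "sets M = sets Omega_measure"
    and shift_preserving: "\<And>x. shift x \<in> measurable M M \<and> distr M M (shift x) = M"
begin

lemma space_eq_UNIV: "space M = UNIV"
  using sets_eq_imp_space_eq[OF sets_eq_Omega] by (simp add: space_Omega_measure)

lemma sets_Collect_of_pred_Omega:
  assumes "Measurable.pred Omega_measure Q"
  shows "{\<omega> \<in> space M. Q \<omega>} \<in> sets M"
  using predE[OF assms] by (simp add: sets_eq_Omega space_eq_UNIV space_Omega_measure)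

lemma nonneg_of_measure_le_mult_exp: "measure M A \<le> K * exp t \<Longrightarrow> K \<ge> 0"
proof -
  assume "measure M A \<le> K * exp t"
  then have "0 \<le> K * exp t" using measure_nonneg[of M A] by linarith
  then show "K \<ge> 0" by (simp add: zero_le_mult_iff)
qed

lemma measure_dens_bad_eq_origin:
  "measure M (dens_bad et \<alpha> x R) = measure M (dens_bad et \<alpha> origin R)"
proof -
  have meas: "shift x \<in> M \<rightarrow>\<^sub>M M" and distr: "distr M M (shift x) = M"
    using shift_preserving by auto
  have "measure M (dens_bad et \<alpha> x R) = measure M (shift x -` dens_bad et \<alpha> origin R \<inter> space M)"
    by (subst dens_bad_shift) (simp add: space_eq_UNIV)
  also have "\<dots> = measure (distr M M (shift x)) (dens_bad et \<alpha> origin R)"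
    by (rule measure_distr[symmetric, OF meas]) (simp add: sets_eq_Omega)
  finally show ?thesis by (simp only: distr)
qed

lemma measure_dens_bad_scale_le:
  assumes "kappa_reg kd2 chk6 CARD('d) \<alpha> \<ge> 0"
  shows "measure M (dens_bad_scale kd2 chk6 DS et \<alpha> k)
    \<le> 3 ^ CARD('d) * exp (CARD('d) * kappa_reg kd2 chk6 CARD('d) \<alpha> * ln (real k + 1) powr (1 + DS))
        * measure M (dens_bad et \<alpha> origin (real k))"
proof -
  let ?r = "r_scale kd2 chk6 CARD('d) DS \<alpha> (real k + 1)"
  have "?r \<ge> 1" unfolding r_scale_def using assms by simp
  have "measure M (dens_bad_scale kd2 chk6 DS et \<alpha> k)
      \<le> (\<Sum>x\<in>lball origin ?r. measure M (dens_bad et \<alpha> x (real k)))"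
    unfolding dens_bad_scale_def by (intro measure_UNION_le finite_lball) (simp add: sets_eq_Omega)
  also have "\<dots> = real (card (lball (origin::'d pt) ?r)) * measure M (dens_bad et \<alpha> origin (real k))"
    by (subst sum.cong[OF HOL.refl measure_dens_bad_eq_origin]) simp_all
  also have "\<dots> \<le> (3 * ?r) ^ CARD('d) * measure M (dens_bad et \<alpha> origin (real k))"
    using \<open>?r \<ge> 1\<close> by (intro mult_right_mono card_lball_le) auto
  also have "(3 * ?r) ^ CARD('d)
      = 3 ^ CARD('d) * exp (CARD('d) * kappa_reg kd2 chk6 CARD('d) \<alpha> * ln (real k + 1) powr (1 + DS))"
    unfolding r_scale_def power_mult_distrib exp_of_nat_mult[symmetric] by (simp add: mult.assoc)
  finally show ?thesis .
qed

text \<open>The rate kd2/6: the centres cost at most exp(kd2/2 (log (k+1))^p), and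
  (log (k+1))^p \<le> 3/2 (log k)^p for large k.\<close>
lemma eventually_measure_dens_bad_scale_le:
  assumes "DS > 0" "kd2 \<alpha> > 0" "chk6 > 0"
    and origin_bound: "\<And>R. R \<ge> 1 \<Longrightarrow>
      measure M (dens_bad et \<alpha> origin R) \<le> K * exp (- kd2 \<alpha> * ln R powr (1 + DS))"
  shows "eventually (\<lambda>k. measure M (dens_bad_scale kd2 chk6 DS et \<alpha> k)
    \<le> 3 ^ CARD('d) * K * exp (- (kd2 \<alpha> / 6) * ln (real k + 1) powr (1 + DS))) sequentially"
proof -
  define \<kappa> where "\<kappa> = kappa_reg kd2 chk6 CARD('d) \<alpha>"
  let ?L = "\<lambda>t. ln t powr (1 + DS)"
  have "\<kappa> \<ge> 0" "CARD('d) * \<kappa> \<le> kd2 \<alpha> / 2"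
    using assms(2,3) unfolding \<kappa>_def kappa_reg_def by auto
  have "K \<ge> 0" using origin_bound[OF order_refl] by (rule nonneg_of_measure_le_mult_exp)
  have "eventually (\<lambda>k::nat. CARD('d) * \<kappa> * ?L (real k + 1) - kd2 \<alpha> * ?L (real k)
      \<le> - (kd2 \<alpha> / 6) * ?L (real k + 1)) sequentially"
    using assms(1,2) \<open>\<kappa> \<ge> 0\<close> \<open>CARD('d) * \<kappa> \<le> kd2 \<alpha> / 2\<close>
    by (intro eventually_ln_powr_succ_le) auto
  moreover have "eventually (\<lambda>k::nat. k \<ge> 1) sequentially" by (rule eventually_ge_at_top)
  ultimately show ?thesis
  proof eventually_elim
    case (elim k)
    have "measure M (dens_bad_scale kd2 chk6 DS et \<alpha> k)
        \<le> 3 ^ CARD('d) * exp (CARD('d) * \<kappa> * ?L (real k + 1)) * measure M (dens_bad et \<alpha> origin (real k))"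
      unfolding \<kappa>_def by (rule measure_dens_bad_scale_le) (use \<open>\<kappa> \<ge> 0\<close> \<kappa>_def in simp)
    also have "\<dots> \<le> 3 ^ CARD('d) * exp (CARD('d) * \<kappa> * ?L (real k + 1)) * (K * exp (- kd2 \<alpha> * ?L (real k)))"
      using elim(2) by (intro mult_left_mono origin_bound) auto
    also have "\<dots> = 3 ^ CARD('d) * K * exp (CARD('d) * \<kappa> * ?L (real k + 1) - kd2 \<alpha> * ?L (real k))"
      by (simp add: exp_diff exp_minus divide_inverse mult_ac)
    also have "\<dots> \<le> 3 ^ CARD('d) * K * exp (- (kd2 \<alpha> / 6) * ?L (real k + 1))"
      using elim(1) \<open>K \<ge> 0\<close> by (intro mult_left_mono) auto
    finally show ?case .
  qed
qed

lemma measure_Rden_ge_le_suminf: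
  assumes "kappa_reg kd2 chk6 CARD('d) \<alpha> \<ge> 0" "1 + DS \<ge> 0" "n \<ge> 2"
    and summable: "summable (\<lambda>i. measure M (dens_bad_scale kd2 chk6 DS et \<alpha> (n - 1 + i)))"
  shows "measure M {\<omega> \<in> space M. ereal (real n) \<le> R_den kd2 chk6 DS et \<omega> \<alpha>}
    \<le> (\<Sum>i. measure M (dens_bad_scale kd2 chk6 DS et \<alpha> (n - 1 + i)))"
proof -
  let ?F = "\<lambda>i. dens_bad_scale kd2 chk6 DS et \<alpha> (n - 1 + i)"
  have sets: "range ?F \<subseteq> sets M" by (auto simp: sets_eq_Omega)
  have "{\<omega> \<in> space M. ereal (real n) \<le> R_den kd2 chk6 DS et \<omega> \<alpha>} \<subseteq> (\<Union>i. ?F i)"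
  proof
    fix \<omega> assume "\<omega> \<in> {\<omega> \<in> space M. ereal (real n) \<le> R_den kd2 chk6 DS et \<omega> \<alpha>}"
    then have "ereal (real n) \<le> R_den kd2 chk6 DS et \<omega> \<alpha>" by simp
    from Rden_ge_imp_dens_bad_scale[OF assms(1-3) this]
    obtain k where "k \<ge> n - 1" "\<omega> \<in> dens_bad_scale kd2 chk6 DS et \<alpha> k" by blast
    then have "\<omega> \<in> ?F (k - (n - 1))" by simp
    then show "\<omega> \<in> (\<Union>i. ?F i)" by blast
  qed
  then have "measure M {\<omega> \<in> space M. ereal (real n) \<le> R_den kd2 chk6 DS et \<omega> \<alpha>} \<le> measure M (\<Union>i. ?F i)"
    using sets by (intro finite_measure_mono) auto
  also have "\<dots> \<le> (\<Sum>i. measure M (?F i))"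
    using sets summable by (rule finite_measure_subadditive_countably)
  finally show ?thesis .
qed

lemma measure_Rden_ge_le:
  assumes "DS > 0" "kd2 \<alpha> > 0" "chk6 > 0"
    and origin_bound: "\<And>R. R \<ge> 1 \<Longrightarrow>
      measure M (dens_bad et \<alpha> origin R) \<le> K * exp (- kd2 \<alpha> * ln R powr (1 + DS))"
  obtains C c where "C > 0" "c > 0"
    "\<And>n. measure M {\<omega> \<in> space M. ereal (real n) \<le> R_den kd2 chk6 DS et \<omega> \<alpha>}
       \<le> C * exp (- c * ln (real n) powr (1 + DS))"
proof -
  let ?G = "\<lambda>n::nat. {\<omega> \<in> space M. ereal (real n) \<le> R_den kd2 chk6 DS et \<omega> \<alpha>}"
  let ?F = "dens_bad_scale kd2 chk6 DS et \<alpha>"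
  let ?D = "3 ^ CARD('d) * K" and ?a = "kd2 \<alpha> / 6" and ?p = "1 + DS"
  have \<kappa>: "kappa_reg kd2 chk6 CARD('d) \<alpha> \<ge> 0"
    using assms(2,3) unfolding kappa_reg_def by simp
  have "?D \<ge> 0" using nonneg_of_measure_le_mult_exp[OF origin_bound[OF order_refl]] by simp
  obtain k1 where k1: "\<And>k. k \<ge> k1 \<Longrightarrow> measure M (?F k) \<le> ?D * exp (- ?a * ln (real k + 1) powr ?p)"
    using eventually_measure_dens_bad_scale_le[of DS kd2 \<alpha> chk6 et K, OF assms]
    unfolding eventually_sequentially by blast
  have "?p > 1" "?a > 0" using assms(1,2) by auto
  then obtain C0 where C0: "\<And>n. n \<ge> 1 \<Longrightarrow> summable (\<lambda>i. exp (- ?a * ln (real (n + i)) powr ?p)) \<and>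
      (\<Sum>i. exp (- ?a * ln (real (n + i)) powr ?p)) \<le> C0 * exp (- (?a / 2) * ln (real n) powr ?p)"
    by (rule suminf_exp_neg_ln_powr_tail_le) blast
  have "eventually (\<lambda>n. measure M (?G n) \<le> (?D * C0) * exp (- (?a / 2) * ln (real n) powr ?p)) sequentially"
  proof (rule eventually_sequentiallyI)
    fix n :: nat assume n: "max 2 (k1 + 1) \<le> n"
    have F_le: "measure M (?F (n - 1 + i)) \<le> ?D * exp (- ?a * ln (real (n + i)) powr ?p)" for i
      using k1[of "n - 1 + i"] n by simp
    have tail: "summable (\<lambda>i. exp (- ?a * ln (real (n + i)) powr ?p))"
      "(\<Sum>i. exp (- ?a * ln (real (n + i)) powr ?p)) \<le> C0 * exp (- (?a / 2) * ln (real n) powr ?p)"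
      using C0[of n] n by auto
    have F_summable: "summable (\<lambda>i. measure M (?F (n - 1 + i)))"
      using F_le by (intro summable_comparison_test'[OF summable_mult[OF tail(1)], of 0]) auto
    have "measure M (?G n) \<le> (\<Sum>i. measure M (?F (n - 1 + i)))"
      using \<kappa> assms(1) n F_summable by (intro measure_Rden_ge_le_suminf) auto
    also have "\<dots> \<le> (\<Sum>i. ?D * exp (- ?a * ln (real (n + i)) powr ?p))"
      using F_le F_summable summable_mult[OF tail(1)] by (intro suminf_le) auto
    also have "\<dots> = ?D * (\<Sum>i. exp (- ?a * ln (real (n + i)) powr ?p))"
      using tail(1) by (rule suminf_mult)
    also have "\<dots> \<le> ?D * (C0 * exp (- (?a / 2) * ln (real n) powr ?p))"
      using tail(2) \<open>?D \<ge> 0\<close> by (rule mult_left_mono)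
    finally show "measure M (?G n) \<le> (?D * C0) * exp (- (?a / 2) * ln (real n) powr ?p)"
      by (simp add: mult.assoc)
  qed
  from eventually_le_imp_le_const_mult[OF this prob_le_1 exp_gt_zero]
  obtain C where "C > 0" "\<And>n. measure M (?G n) \<le> C * exp (- (?a / 2) * ln (real n) powr ?p)"
    by blast
  moreover have "?a / 2 > 0" using assms(2) by simp
  ultimately show thesis using that by blast
qed

lemma Rden_tail_bound_and_AE:
  assumes "DS > 0" "kd2 \<alpha> > 0" "chk6 > 0"
    and "\<exists>K. \<forall>R\<ge>1. measure M (dens_bad et \<alpha> origin R) \<le> K * exp (- kd2 \<alpha> * ln R powr (1 + DS))"
  shows "(\<exists>C c. C > 0 \<and> c > 0 \<and>
        (\<forall>n::nat. n \<ge> 1 \<longrightarrow>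
           {\<omega> \<in> space M. R_den kd2 chk6 DS et \<omega> \<alpha> \<ge> ereal (real n)} \<in> sets M \<and>
           measure M {\<omega> \<in> space M. R_den kd2 chk6 DS et \<omega> \<alpha> \<ge> ereal (real n)}
             \<le> C * exp (- c * ln (real n) powr (1 + DS)))) \<and>
     (AE \<omega> in M. R_den kd2 chk6 DS et \<omega> \<alpha> < \<infinity> \<and>
        (\<forall>R. ereal R \<ge> R_den kd2 chk6 DS et \<omega> \<alpha> \<longrightarrow> dens_good kd2 chk6 DS et \<omega> \<alpha> R))"
proof -
  obtain K where "\<And>R. R \<ge> 1 \<Longrightarrow> measure M (dens_bad et \<alpha> origin R) \<le> K * exp (- kd2 \<alpha> * ln R powr (1 + DS))"
    using assms(4) by blast
  from measure_Rden_ge_le[of DS kd2 \<alpha> chk6, OF assms(1-3) this]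
  obtain C c where "C > 0" "c > 0" and tail: "\<And>n. measure M
      {\<omega> \<in> space M. ereal (real n) \<le> R_den kd2 chk6 DS et \<omega> \<alpha>} \<le> C * exp (- c * ln (real n) powr (1 + DS))"
    by blast
  have sets: "\<And>n. {\<omega> \<in> space M. ereal (real n) \<le> R_den kd2 chk6 DS et \<omega> \<alpha>} \<in> sets M"
    by (rule sets_Collect_of_pred_Omega[OF pred_Rden_ge])
  have "AE \<omega> in M. R_den kd2 chk6 DS et \<omega> \<alpha> < \<infinity>"
    using \<open>c > 0\<close> assms(1)
    by (intro AE_less_PInf_of_tail_bound[OF sets tail] tendsto_exp_neg_ln_powr) auto
  moreover have "dens_good kd2 chk6 DS et \<omega> \<alpha> R"
    if "R_den kd2 chk6 DS et \<omega> \<alpha> \<le> ereal R" for \<omega> :: "'d config" and R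
    using assms(1-3) that by (intro dens_good_of_Rden_le) (auto simp: kappa_reg_def)
  ultimately have "AE \<omega> in M. R_den kd2 chk6 DS et \<omega> \<alpha> < \<infinity> \<and>
      (\<forall>R. ereal R \<ge> R_den kd2 chk6 DS et \<omega> \<alpha> \<longrightarrow> dens_good kd2 chk6 DS et \<omega> \<alpha> R)"
    by (elim eventually_mono) blast
  then show ?thesis
    using \<open>C > 0\<close> \<open>c > 0\<close> sets tail by blast
qed

end

theorem proposition3p2:
  fixes P :: "real \<Rightarrow> ('d::finite) config measure"
    and a b u :: real
    and fS :: "real \<Rightarrow> real \<Rightarrow> real" and DeltaS RS :: "real \<Rightarrow> real"
    and kd2 :: "real \<Rightarrow> real" and chk6 :: real
  assumes d2: "CARD('d) \<ge> 2"
    and ab: "0 < a" "a < b"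
    and meas: "\<And>v. a < v \<Longrightarrow> v < b \<Longrightarrow> prob_space (P v) \<and> sets (P v) = sets Omega_measure"
    and P1: "\<And>v. a < v \<Longrightarrow> v < b \<Longrightarrow> shift_invariant_ergodic (P v)"
    and P2: "cond_P2 a b P"
    and D: "cond_D a b P"
    and S1: "cond_S1 a b P fS DeltaS RS"
    and S2: "\<And>v. a < v \<Longrightarrow> v < b \<Longrightarrow> eta P v > 0" "continuous_on {a<..<b} (eta P)"
    and u: "a < u" "u < b"
    and chk6: "chk6 > 0"
    and kd2_pos: "\<And>\<alpha>. 0 < \<alpha> \<Longrightarrow> \<alpha> < 1 \<Longrightarrow> kd2 \<alpha> > 0"
    and kd2_mono: "mono_on {0<..<1} kd2"
    and kd2_bound: "\<And>\<alpha>. 0 < \<alpha> \<Longrightarrow> \<alpha> < 1 \<Longrightarrow> \<exists>kd1. \<forall>R\<ge>1.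
        measure (P u) {\<omega> \<in> space (P u). origin \<in> Sinf \<omega> \<and>
            (dens \<omega> origin R < (1 - \<alpha>) * eta P u \<or> dens \<omega> origin R > (1 + \<alpha>) * eta P u)}
          / eta P u
        \<le> kd1 * exp (- kd2 \<alpha> * ln R powr (1 + DeltaS u))"
  shows "\<forall>\<alpha>. 0 < \<alpha> \<and> \<alpha> < 1 \<longrightarrow>
     (\<exists>C c. C > 0 \<and> c > 0 \<and>
        (\<forall>n::nat. n \<ge> 1 \<longrightarrow>
           {\<omega> \<in> space (P u). R_den kd2 chk6 (DeltaS u) (eta P u) \<omega> \<alpha> \<ge> ereal (real n)} \<in> sets (P u) \<and>
           measure (P u) {\<omega> \<in> space (P u). R_den kd2 chk6 (DeltaS u) (eta P u) \<omega> \<alpha> \<ge> ereal (real n)}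
             \<le> C * exp (- c * ln (real n) powr (1 + DeltaS u)))) \<and>
     (AE \<omega> in P u. R_den kd2 chk6 (DeltaS u) (eta P u) \<omega> \<alpha> < \<infinity> \<and>
        (\<forall>R. ereal R \<ge> R_den kd2 chk6 (DeltaS u) (eta P u) \<omega> \<alpha> \<longrightarrow>
           dens_good kd2 chk6 (DeltaS u) (eta P u) \<omega> \<alpha> R))"
proof -
  interpret stationary_config_measure "P u"
    using meas[OF u] P1[OF u]
    by (simp add: stationary_config_measure_def stationary_config_measure_axioms_def shift_invariant_ergodic_def)
  have DS: "DeltaS u > 0" using S1 u unfolding cond_S1_def by blast
  have origin_bound: "\<exists>K. \<forall>R\<ge>1. measure (P u) (dens_bad (eta P u) \<alpha> origin R)
      \<le> K * exp (- kd2 \<alpha> * ln R powr (1 + DeltaS u))" if \<alpha>: "0 < \<alpha>" "\<alpha> < 1" for \<alpha>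
  proof -
    obtain kd1 where "\<forall>R\<ge>1. measure (P u) (dens_bad (eta P u) \<alpha> origin R) / eta P u
        \<le> kd1 * exp (- kd2 \<alpha> * ln R powr (1 + DeltaS u))"
      using kd2_bound[OF \<alpha>] unfolding dens_bad_def space_eq_UNIV by auto
    then show ?thesis
      using S2(1)[OF u] by (intro exI[of _ "eta P u * kd1"]) (simp add: pos_divide_le_eq mult_ac)
  qed
  show ?thesis
    using DS chk6 kd2_pos origin_bound by (intro allI impI Rden_tail_bound_and_AE) auto
qed

end
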